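(* Let $k$ be a field of characteristic $\neq 2$, and let $\mathfrak g$, $u_0,u_1,u_2$ and $\mathfrak g_0,\mathfrak g_1,\mathfrak g_2$ be as in the context. For each $i=0,1,2$, the set $\{u_i\}\cup\{u_it^n,\ u_i(t')^n,\ u_i(t'')^n: n\geq 1\}$ is a $k$-basis of $\mathfrak g_i$.
   Context: $\mathcal A=k[t,t^{-1},(1-t)^{-1}]$, $t'=1-t^{-1}$, $t''=(1-t)^{-1}$, $\mathfrak g=\mathfrak{sl}_2(k)\otimes_k\mathcal A$. With $x=\begin{pmatrix}-1&2\\0&1\end{pmatrix}$, $y=\begin{pmatrix}-1&0\\-2&1\end{pmatrix}$, $z=\begin{pmatrix}1&0\\0&-1\end{pmatrix}$: $u_0=\tfrac14(z\otimes 1+x\otimes t''+y\otimes(t''-1))$, $u_1=\tfrac14(x\otimes 1+y\otimes t+z\otimes(t-1))$, $u_2=\tfrac14(y\otimes 1+z\otimes t'+x\otimes(t'-1))$. $\tau_1$ is the $\mathcal A$-linear map of $\mathfrak g$ with $\tau_1(x\otimes 1)=-x\otimes 1$, $\tau_1(y\otimes 1)=-(z\otimes t'+x\otimes(t'-1))$, $\tau_1(z\otimes 1)=x\otimes t''+y\otimes(t''-1)$; $\tau_2$ is the $\mathcal A$-linear map with $\tau_2(x\otimes 1)=y\otimes t+z\otimes(t-1)$, $\tau_2(y\otimes 1)=-y\otimes 1$, $\tau_2(z\otimes 1)=-(x\otimes t''+y\otimes(t''-1))$. Then $\mathfrak g_0=\{g:\tau_1(g)=g,\tau_2(g)=-g\}$,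 $\mathfrak g_1=\{g:\tau_1(g)=-g,\tau_2(g)=g\}$, $\mathfrak g_2=\{g:\tau_1(g)=-g,\tau_2(g)=-g\}$. *)

theory Defs
  imports "HOL-Analysis.Finite_Cartesian_Product"
          "HOL-Computational_Algebra.Polynomial"
          "HOL-Computational_Algebra.Polynomial_Factorial"
begin

text \<open>The field of rational functions k(t), containing the algebra
  A = k[t, t^-1, (1-t)^-1]. The field k is the type 'a.\<close>
type_synonym 'a rf = "'a poly fract"

text \<open>2x2 matrices with entries in k(t); sl2(k) tensor A is realised as the
  traceless 2x2 matrices with entries in A, with X tensor f = f X.\<close>
type_synonym 'a mat = "'a rf ^ 2 ^ 2"

definition kc :: "'a::field \<Rightarrow> 'a rf" where
  "kc c = to_fract [:c:]"

definition tvar :: "'a::field rf" where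
  "tvar = to_fract [:0, 1:]"

definition tp :: "'a::field rf" where
  "tp = 1 - inverse tvar"

definition tpp :: "'a::field rf" where
  "tpp = inverse (1 - tvar)"

definition Aset :: "'a::field rf set" where
  "Aset = {to_fract p / (tvar ^ m * (1 - tvar) ^ n) | p m n. True}"

definition mk :: "'b \<Rightarrow> 'b \<Rightarrow> 'b \<Rightarrow> 'b \<Rightarrow> 'b ^ 2 ^ 2" where
  "mk a b c d = (\<chi> i j. if i = 1 then (if j = 1 then a else b)
                              else (if j = 1 then c else d))"

definition sm :: "'b::times \<Rightarrow> 'b ^ 2 ^ 2 \<Rightarrow> 'b ^ 2 ^ 2" where
  "sm f M = (\<chi> i j. f * M $ i $ j)"

definition tens :: "'b::times ^ 2 ^ 2 \<Rightarrow> 'b \<Rightarrow> 'b ^ 2 ^ 2" where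
  "tens X f = sm f X"

definition gset :: "'a::field mat set" where
  "gset = {M. (\<forall>i j. M $ i $ j \<in> Aset) \<and> M $ 1 $ 1 + M $ 2 $ 2 = 0}"

definition Xm :: "'a::field mat" where "Xm = mk (-1) 2 0 1"
definition Ym :: "'a::field mat" where "Ym = mk (-1) 0 (-2) 1"
definition Zm :: "'a::field mat" where "Zm = mk 1 0 0 (-1)"

definition u0 :: "'a::field mat" where
  "u0 = sm (1/4) (tens Zm 1 + tens Xm tpp + tens Ym (tpp - 1))"
definition u1 :: "'a::field mat" where
  "u1 = sm (1/4) (tens Xm 1 + tens Ym tvar + tens Zm (tvar - 1))"
definition u2 :: "'a::field mat" where
  "u2 = sm (1/4) (tens Ym 1 + tens Zm tp + tens Xm (tp - 1))"

definition A_linear :: "('a::field mat \<Rightarrow> 'a mat) \<Rightarrow> bool" where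
  "A_linear \<tau> \<longleftrightarrow> (\<forall>M\<in>gset. \<tau> M \<in> gset) \<and>
     (\<forall>f\<in>Aset. \<forall>M\<in>gset. \<forall>N\<in>gset. \<tau> (sm f M + N) = sm f (\<tau> M) + \<tau> N)"

definition tau1_spec :: "('a::field mat \<Rightarrow> 'a mat) \<Rightarrow> bool" where
  "tau1_spec \<tau> \<longleftrightarrow> A_linear \<tau> \<and>
     \<tau> (tens Xm 1) = - tens Xm 1 \<and>
     \<tau> (tens Ym 1) = - (tens Zm tp + tens Xm (tp - 1)) \<and>
     \<tau> (tens Zm 1) = tens Xm tpp + tens Ym (tpp - 1)"

definition tau2_spec :: "('a::field mat \<Rightarrow> 'a mat) \<Rightarrow> bool" where
  "tau2_spec \<tau> \<longleftrightarrow> A_linear \<tau> \<and>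
     \<tau> (tens Xm 1) = tens Ym tvar + tens Zm (tvar - 1) \<and>
     \<tau> (tens Ym 1) = - tens Ym 1 \<and>
     \<tau> (tens Zm 1) = - (tens Xm tpp + tens Ym (tpp - 1))"

definition g0 :: "('a::field mat \<Rightarrow> 'a mat) \<Rightarrow> ('a mat \<Rightarrow> 'a mat) \<Rightarrow> 'a mat set" where
  "g0 \<tau>1 \<tau>2 = {M \<in> gset. \<tau>1 M = M \<and> \<tau>2 M = - M}"
definition g1 :: "('a::field mat \<Rightarrow> 'a mat) \<Rightarrow> ('a mat \<Rightarrow> 'a mat) \<Rightarrow> 'a mat set" where
  "g1 \<tau>1 \<tau>2 = {M \<in> gset. \<tau>1 M = - M \<and> \<tau>2 M = M}"
definition g2 :: "('a::field mat \<Rightarrow> 'a mat) \<Rightarrow> ('a mat \<Rightarrow> 'a mat) \<Rightarrow> 'a mat set" where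
  "g2 \<tau>1 \<tau>2 = {M \<in> gset. \<tau>1 M = - M \<and> \<tau>2 M = - M}"

text \<open>k-linear span, k-linear independence and k-bases inside g
  (k acts via the constants kc c).\<close>
definition k_span :: "'a::field mat set \<Rightarrow> 'a mat set" where
  "k_span S = {v. \<exists>F c. finite F \<and> F \<subseteq> S \<and> v = (\<Sum>w\<in>F. sm (kc (c w)) w)}"

definition k_indep :: "'a::field mat set \<Rightarrow> bool" where
  "k_indep S \<longleftrightarrow> (\<forall>F c. finite F \<and> F \<subseteq> S \<and> (\<Sum>w\<in>F. sm (kc (c w)) w) = 0
                     \<longrightarrow> (\<forall>w\<in>F. c w = 0))"

definition k_basis :: "'a::field mat set \<Rightarrow> 'a mat set \<Rightarrow> bool" where
  "k_basis S V \<longleftrightarrow> S \<subseteq> V \<and> k_indep S \<and> k_span S = V"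

definition Bset :: "'a::field mat \<Rightarrow> 'a mat set" where
  "Bset u = {u} \<union> {tens u (tvar ^ n) | n. n \<ge> 1} \<union> {tens u (tp ^ n) | n. n \<ge> 1}
              \<union> {tens u (tpp ^ n) | n. n \<ge> 1}"

end

(*
  Writing elements of g as x a + y b + z c with a, b, c in A (possible since 2 is invertible),
  the conditions tau1 M = +-M, tau2 M = +-M become linear equations over A whose solutions are
  exactly the multiples f u_i with f in A.  So g_i = A u_i, and as f |-> f u_i is injective it
  suffices that {1} and the powers t^n, t'^n, t''^n (n >= 1) form a k-basis of A.  Spanning is
  the existence of partial fraction decompositions: 1/(t (1 - t)) = 1/t + 1/(1 - t) reduces
  p / (t^m (1 - t)^n) to terms with a single pole, which are expanded by division with remainder.
  Independence is their uniqueness: multiplied by a power of t (1 - t), a relation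
  P(t) + t' Q(t') + t'' R(t'') = 0 becomes a polynomial identity whose values at t = 0 and t = 1
  are, up to sign, the leading coefficients of Q and R.
*)
theory Submission
  imports Defs "HOL-Analysis.Cartesian_Space"
begin

section \<open>The ring A\<close>

lemma to_fract_power: "to_fract (p ^ n) = to_fract p ^ n"
  by (induct n) simp_all

lemma kc_add: "kc (a + b) = kc a + kc b"
  by (simp add: kc_def flip: to_fract_add)

lemma kc_mult: "kc (a * b) = kc a * kc b"
  by (simp add: kc_def flip: to_fract_mult)

lemma kc_uminus: "kc (- a) = - kc a"
  by (simp add: kc_def flip: to_fract_uminus)

lemma kc_0 [simp]: "kc 0 = 0"
  by (simp add: kc_def)

lemma kc_1 [simp]: "kc 1 = 1"
  by (simp add: kc_def flip: one_pCons)

lemma kc_eq_iff [simp]: "kc a = kc b \<longleftrightarrow> a = b"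
  by (simp add: kc_def)

lemma kc_of_nat: "kc (of_nat n) = of_nat n"
  by (induct n) (simp_all add: kc_add)

lemma kc_numeral: "kc (numeral n) = numeral n"
  using kc_of_nat[of "numeral n"] by simp

lemma kc_inverse: "kc (inverse a) = inverse (kc a)"
proof (cases "a = 0")
  case False
  then have "kc a * kc (inverse a) = 1"
    by (simp flip: kc_mult)
  then show ?thesis
    by (rule inverse_unique[symmetric])
qed simp

lemma numeral_rf_neq_0:
  assumes "(numeral n :: 'a::field) \<noteq> 0"
  shows "(numeral n :: 'a rf) \<noteq> 0"
  using assms by (metis kc_0 kc_eq_iff kc_numeral)

lemma one_minus_tvar_eq: "1 - tvar = to_fract [:1, -1:]"
  by (simp add: tvar_def one_pCons flip: to_fract_1 to_fract_diff)

lemma tvar_neq_0 [simp]: "tvar \<noteq> 0"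
  by (simp add: tvar_def)

lemma one_neq_tvar [simp]: "1 \<noteq> tvar"
  using one_minus_tvar_eq[where 'a='a] by force

lemma one_minus_tvar_neq_0: "1 - tvar \<noteq> 0"
  by simp

lemma tvar_mult_tp: "tvar * tp = tvar - 1"
  by (simp add: tp_def algebra_simps)

lemma tvar_mult_tpp: "tvar * tpp = tpp - 1"
  by (simp add: tpp_def field_simps)

lemma tp_mult_tpp: "tp * tpp = tp - 1"
proof -
  have tp_eq: "tp = - ((1 - tvar) * inverse tvar)"
    by (simp add: tp_def algebra_simps)
  have "tp * tpp = - (inverse tvar * ((1 - tvar) * inverse (1 - tvar)))"
    unfolding tp_eq tpp_def by (simp only: mult_ac mult_minus_left mult_minus_right)
  also have "\<dots> = tp - 1"
    using one_minus_tvar_neq_0 by (simp add: tp_def)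
  finally show ?thesis .
qed

lemma AsetI: "f = to_fract p / (tvar ^ m * (1 - tvar) ^ n) \<Longrightarrow> f \<in> Aset"
  unfolding Aset_def by blast

lemma AsetE:
  assumes "f \<in> Aset"
  obtains p m n where "f = to_fract p / (tvar ^ m * (1 - tvar) ^ n)"
  using assms unfolding Aset_def by blast

lemma Aset_to_fract: "to_fract p \<in> Aset"
  by (rule AsetI[of _ p 0 0]) simp

lemma Aset_kc: "kc c \<in> Aset"
  unfolding kc_def by (rule Aset_to_fract)

lemma Aset_0: "0 \<in> Aset" and Aset_1: "1 \<in> Aset" and Aset_numeral: "numeral n \<in> Aset"
  using Aset_kc[of 0] Aset_kc[of 1] Aset_kc[of "numeral n"] by (simp_all add: kc_numeral)

lemma Aset_tvar: "tvar \<in> Aset"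
  unfolding tvar_def by (rule Aset_to_fract)

lemma Aset_tpp: "tpp \<in> Aset"
  unfolding tpp_def by (rule AsetI[of _ 1 0 1]) (simp add: field_simps)

lemma Aset_tp: "tp \<in> Aset"
  by (rule AsetI[of _ "[:0, 1:] - 1" 1 0]) (simp add: tp_def field_simps flip: tvar_def)

lemma Aset_add:
  assumes "f \<in> Aset" "g \<in> Aset"
  shows "f + g \<in> Aset"
proof -
  obtain p m n where f: "f = to_fract p / (tvar ^ m * (1 - tvar) ^ n)"
    using assms(1) by (rule AsetE)
  obtain q m' n' where g: "g = to_fract q / (tvar ^ m' * (1 - tvar) ^ n')"
    using assms(2) by (rule AsetE)
  have common_denominator: "a / (x ^ m * s ^ n) + b / (x ^ m' * s ^ n')
      = (a * x ^ m' * s ^ n' + b * x ^ m * s ^ n) / (x ^ (m + m') * s ^ (n + n'))"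
    if "x \<noteq> 0" "s \<noteq> 0" for a b x s :: "'a rf"
    using that by (simp add: field_simps power_add)
  have "f + g = to_fract (p * [:0, 1:] ^ m' * [:1, -1:] ^ n' + q * [:0, 1:] ^ m * [:1, -1:] ^ n)
                / (tvar ^ (m + m') * (1 - tvar) ^ (n + n'))"
    unfolding f g common_denominator[OF tvar_neq_0 one_minus_tvar_neq_0]
    by (simp add: to_fract_power flip: one_minus_tvar_eq tvar_def)
  then show ?thesis
    by (rule AsetI)
qed

lemma Aset_mult:
  assumes "f \<in> Aset" "g \<in> Aset"
  shows "f * g \<in> Aset"
proof -
  obtain p m n where f: "f = to_fract p / (tvar ^ m * (1 - tvar) ^ n)"
    using assms(1) by (rule AsetE)
  obtain q m' n' where g: "g = to_fract q / (tvar ^ m' * (1 - tvar) ^ n')"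
    using assms(2) by (rule AsetE)
  have "f * g = to_fract (p * q) / (tvar ^ (m + m') * (1 - tvar) ^ (n + n'))"
    unfolding f g by (simp add: times_divide_times_eq power_add mult_ac)
  then show ?thesis by (rule AsetI)
qed

lemma Aset_uminus:
  assumes "f \<in> Aset"
  shows "- f \<in> Aset"
proof -
  have "- f = kc (- 1) * f"
    by (simp add: kc_uminus)
  then show ?thesis
    using Aset_mult[OF Aset_kc assms] by simp
qed

lemma Aset_diff: "f \<in> Aset \<Longrightarrow> g \<in> Aset \<Longrightarrow> f - g \<in> Aset"
  unfolding diff_conv_add_uminus by (intro Aset_add Aset_uminus)

lemma Aset_power: "f \<in> Aset \<Longrightarrow> f ^ n \<in> Aset"
  by (induct n) (auto intro: Aset_1 Aset_mult)

lemma Aset_divide_numeral: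
  assumes "f \<in> Aset"
  shows "f / numeral n \<in> Aset"
proof -
  have "f / numeral n = kc (inverse (numeral n)) * f"
    by (simp only: kc_inverse kc_numeral divide_inverse mult.commute)
  then show ?thesis
    using Aset_mult[OF Aset_kc assms] by (simp only:)
qed

section \<open>Coordinates with respect to x, y, z\<close>

lemma mk_nth [simp]:
  "mk a b c d $ 1 $ 1 = a" "mk a b c d $ 1 $ 2 = b" "mk a b c d $ 2 $ 1 = c" "mk a b c d $ 2 $ 2 = d"
  by (simp_all add: mk_def)

lemma mat2_eqI:
  fixes M N :: "'b ^ 2 ^ 2"
  assumes "M $ 1 $ 1 = N $ 1 $ 1" "M $ 1 $ 2 = N $ 1 $ 2" "M $ 2 $ 1 = N $ 2 $ 1" "M $ 2 $ 2 = N $ 2 $ 2"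
  shows "M = N"
  using assms by (simp add: vec_eq_iff forall_2)

lemma mk_eq_iff: "mk a b c d = mk a' b' c' d' \<longleftrightarrow> a = a' \<and> b = b' \<and> c = c' \<and> d = d'"
  by (metis mat2_eqI mk_nth)

lemma mk_add: "mk a b c d + mk a' b' c' d' = mk (a + a') (b + b') (c + c') (d + d')"
  by (rule mat2_eqI) simp_all

lemma mk_uminus: "- mk a b c d = mk (- a) (- b) (- c) (- d)"
  by (rule mat2_eqI) simp_all

lemma mk_0: "mk 0 0 0 0 = 0"
  by (rule mat2_eqI) simp_all

lemma sm_mk: "sm f (mk a b c d) = mk (f * a) (f * b) (f * c) (f * d)"
  by (rule mat2_eqI) (simp_all add: sm_def)

lemma sm_1 [simp]: "sm 1 M = (M :: 'b::monoid_mult ^ 2 ^ 2)"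
  by (simp add: sm_def vec_eq_iff)

lemma sm_0 [simp]: "sm 0 M = (0 :: 'b::mult_zero ^ 2 ^ 2)"
  by (simp add: sm_def vec_eq_iff)

lemma sm_sm: "sm a (sm b M) = sm (a * b) (M :: 'b::semigroup_mult ^ 2 ^ 2)"
  by (simp add: sm_def vec_eq_iff mult.assoc)

lemma sm_add_left: "sm (a + b) M = sm a M + sm b (M :: 'b::semiring ^ 2 ^ 2)"
  by (simp add: sm_def vec_eq_iff distrib_right)

lemma sm_add_right: "sm a (M + N) = sm a M + sm a (N :: 'b::semiring ^ 2 ^ 2)"
  by (simp add: sm_def vec_eq_iff distrib_left)

lemma sm_eq_0_iff: "sm a M = 0 \<longleftrightarrow> a = 0 \<or> M = (0 :: 'b::field ^ 2 ^ 2)"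
  by (auto simp: sm_def vec_eq_iff)

lemma sm_left_cancel:
  assumes "M \<noteq> 0" "sm a M = sm b (M :: 'b::field ^ 2 ^ 2)"
  shows "a = b"
proof -
  have "sm (a - b) M = 0"
    using assms(2) by (simp add: sm_def vec_eq_iff algebra_simps)
  then show ?thesis
    using assms(1) by (simp add: sm_eq_0_iff)
qed

definition xyz :: "'a::field rf \<Rightarrow> 'a rf \<Rightarrow> 'a rf \<Rightarrow> 'a mat" where
  "xyz a b c = sm a Xm + sm b Ym + sm c Zm"

lemma xyz_eq_mk: "xyz a b c = mk (c - a - b) (2 * a) (- (2 * b)) (a + b - c)"
  unfolding xyz_def Xm_def Ym_def Zm_def sm_mk mk_add mk_eq_iff by simp

lemma xyz_add: "xyz a b c + xyz a' b' c' = xyz (a + a') (b + b') (c + c')"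
  unfolding xyz_eq_mk mk_add mk_eq_iff by (simp add: algebra_simps)

lemma xyz_uminus: "- xyz a b c = xyz (- a) (- b) (- c)"
  unfolding xyz_eq_mk mk_uminus mk_eq_iff by (simp add: algebra_simps)

lemma sm_xyz: "sm f (xyz a b c) = xyz (f * a) (f * b) (f * c)"
  unfolding xyz_eq_mk sm_mk mk_eq_iff by (simp add: algebra_simps)

lemma xyz_0: "xyz 0 0 0 = 0"
  unfolding xyz_eq_mk by (simp add: mk_0)

lemma Xm_eq_xyz: "Xm = xyz 1 0 0" and Ym_eq_xyz: "Ym = xyz 0 1 0" and Zm_eq_xyz: "Zm = xyz 0 0 1"
  by (simp_all add: xyz_def)

lemma xyz_eq_iff:
  assumes "(2::'a::field) \<noteq> 0"
  shows "xyz a b c = xyz a' b' c' \<longleftrightarrow> a = a' \<and> b = b' \<and> (c :: 'a rf) = c'"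
proof -
  have "(2::'a rf) \<noteq> 0"
    using numeral_rf_neq_0[OF assms] .
  then show ?thesis
    unfolding xyz_eq_mk mk_eq_iff by auto
qed

lemma xyz_in_gset: "a \<in> Aset \<Longrightarrow> b \<in> Aset \<Longrightarrow> c \<in> Aset \<Longrightarrow> xyz a b c \<in> gset"
  unfolding gset_def xyz_eq_mk
  by (auto simp: forall_2 Aset_add Aset_diff Aset_mult Aset_uminus Aset_numeral)

lemma gset_xyzE:
  assumes "(2::'a::field) \<noteq> 0" "M \<in> gset"
  obtains a b c where "a \<in> Aset" "b \<in> Aset" "c \<in> Aset" "M = (xyz a b c :: 'a mat)"
proof
  have entries: "M $ i $ j \<in> Aset" for i j
    using assms(2) by (simp add: gset_def)
  show "M $ 1 $ 2 / 2 \<in> Aset" "- (M $ 2 $ 1 / 2) \<in> Aset"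
    "M $ 1 $ 1 + M $ 1 $ 2 / 2 - M $ 2 $ 1 / 2 \<in> Aset"
    using entries by (simp_all add: Aset_add Aset_diff Aset_uminus Aset_divide_numeral)
  have "(2::'a rf) \<noteq> 0"
    using numeral_rf_neq_0[OF assms(1)] .
  moreover have "M $ 2 $ 2 = - M $ 1 $ 1"
    using assms(2) by (simp add: gset_def eq_neg_iff_add_eq_0 add.commute)
  ultimately show "M = xyz (M $ 1 $ 2 / 2) (- (M $ 2 $ 1 / 2)) (M $ 1 $ 1 + M $ 1 $ 2 / 2 - M $ 2 $ 1 / 2)"
    unfolding xyz_eq_mk by (intro mat2_eqI) simp_all
qed

lemma gset_0: "0 \<in> gset"
  using xyz_in_gset[OF Aset_0 Aset_0 Aset_0] by (simp add: xyz_0)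

lemma A_linear_0:
  assumes "A_linear \<tau>"
  shows "\<tau> 0 = 0"
proof -
  have "\<tau> (sm 1 0 + 0) = sm 1 (\<tau> 0) + \<tau> 0"
    using assms Aset_1 gset_0 unfolding A_linear_def by blast
  then show ?thesis
    by simp
qed

lemma A_linear_xyz:
  assumes "A_linear \<tau>" "a \<in> Aset" "b \<in> Aset" "c \<in> Aset"
  shows "\<tau> (xyz a b c) = sm a (\<tau> Xm) + sm b (\<tau> Ym) + sm c (\<tau> Zm)"
proof -
  have lin: "\<tau> (sm f M + N) = sm f (\<tau> M) + \<tau> N" if "f \<in> Aset" "M \<in> gset" "N \<in> gset" for f M N
    using assms(1) that by (simp add: A_linear_def)
  have in_gset: "Xm \<in> gset" "Ym \<in> gset" "Zm \<in> gset" "xyz 0 b c \<in> gset" "xyz 0 0 c \<in> gset"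
    using assms(3,4) by (simp_all add: Xm_eq_xyz Ym_eq_xyz Zm_eq_xyz xyz_in_gset Aset_0 Aset_1)
  have split: "xyz a b c = sm a Xm + xyz 0 b c" "xyz 0 b c = sm b Ym + xyz 0 0 c"
    "xyz 0 0 c = sm c Zm + 0"
    by (simp_all add: xyz_def)
  have "\<tau> (xyz a b c) = sm a (\<tau> Xm) + \<tau> (xyz 0 b c)"
    unfolding split(1) by (rule lin[OF assms(2) in_gset(1,4)])
  also have "\<tau> (xyz 0 b c) = sm b (\<tau> Ym) + \<tau> (xyz 0 0 c)"
    unfolding split(2) by (rule lin[OF assms(3) in_gset(2,5)])
  also have "\<tau> (xyz 0 0 c) = sm c (\<tau> Zm)"
    unfolding split(3) using lin[OF assms(4) in_gset(3) gset_0] A_linear_0[OF assms(1)] by simp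
  finally show ?thesis
    by (simp add: add.assoc)
qed

lemma tau1_xyz:
  assumes "tau1_spec \<tau>" "a \<in> Aset" "b \<in> Aset" "c \<in> Aset"
  shows "\<tau> (xyz a b c) = xyz (b * (1 - tp) + c * tpp - a) (c * (tpp - 1)) (- (b * tp))"
proof -
  have "\<tau> Xm = xyz (- 1) 0 0" "\<tau> Ym = xyz (1 - tp) 0 (- tp)" "\<tau> Zm = xyz tpp (tpp - 1) 0"
    using assms(1) by (simp_all add: tau1_spec_def tens_def xyz_def sm_def vec_eq_iff algebra_simps)
  then show ?thesis
    using assms by (simp add: tau1_spec_def A_linear_xyz sm_xyz xyz_add algebra_simps)
qed

lemma tau2_xyz:
  assumes "tau2_spec \<tau>" "a \<in> Aset" "b \<in> Aset" "c \<in> Aset"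
  shows "\<tau> (xyz a b c) = xyz (- (c * tpp)) (a * tvar - b + c * (1 - tpp)) (a * (tvar - 1))"
proof -
  have "\<tau> Xm = xyz 0 tvar (tvar - 1)" "\<tau> Ym = xyz 0 (- 1) 0" "\<tau> Zm = xyz (- tpp) (1 - tpp) 0"
    using assms(1) by (simp_all add: tau2_spec_def tens_def xyz_def sm_def vec_eq_iff algebra_simps)
  then show ?thesis
    using assms by (simp add: tau2_spec_def A_linear_xyz sm_xyz xyz_add algebra_simps)
qed

section \<open>The eigenspaces g0, g1, g2\<close>

lemma g0_eq:
  assumes two: "(2::'a::field) \<noteq> 0" and \<tau>1: "tau1_spec \<tau>1" and \<tau>2: "tau2_spec \<tau>2"
  shows "g0 \<tau>1 \<tau>2 = (\<lambda>f. sm f (xyz tpp (tpp - 1) 1)) ` (Aset :: 'a rf set)"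
proof (intro equalityI subsetI)
  fix M :: "'a mat"
  assume "M \<in> g0 \<tau>1 \<tau>2"
  then have M: "M \<in> gset" "\<tau>1 M = M" "\<tau>2 M = - M"
    by (simp_all add: g0_def)
  obtain a b c where abc: "a \<in> Aset" "b \<in> Aset" "c \<in> Aset" and M_eq: "M = xyz a b c"
    using gset_xyzE[OF two M(1)] .
  have "c * (tpp - 1) = b"
    using M(2) by (simp add: M_eq tau1_xyz[OF \<tau>1 abc] xyz_eq_iff[OF two])
  moreover have "c * tpp = a"
    using M(3) by (simp add: M_eq tau2_xyz[OF \<tau>2 abc] xyz_uminus xyz_eq_iff[OF two])
  ultimately have "M = sm c (xyz tpp (tpp - 1) 1)"
    by (simp add: M_eq sm_xyz)
  then show "M \<in> (\<lambda>f. sm f (xyz tpp (tpp - 1) 1)) ` Aset"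
    using abc(3) by blast
next
  fix M :: "'a mat"
  assume "M \<in> (\<lambda>f. sm f (xyz tpp (tpp - 1) 1)) ` Aset"
  then obtain f where f: "f \<in> Aset" and M_eq: "M = xyz (f * tpp) (f * (tpp - 1)) f"
    by (auto simp: sm_xyz)
  have coords: "f * tpp \<in> Aset" "f * (tpp - 1) \<in> Aset"
    using f by (simp_all add: Aset_mult Aset_diff Aset_tpp Aset_1)
  have "M \<in> gset"
    unfolding M_eq using coords f by (rule xyz_in_gset)
  moreover have "\<tau>1 M = M"
    unfolding M_eq tau1_xyz[OF \<tau>1 coords f] xyz_eq_iff[OF two]
    using tp_mult_tpp[where 'a='a] by algebra
  moreover have "\<tau>2 M = - M"
    unfolding M_eq tau2_xyz[OF \<tau>2 coords f] xyz_uminus xyz_eq_iff[OF two]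
    using tvar_mult_tpp[where 'a='a] by algebra
  ultimately show "M \<in> g0 \<tau>1 \<tau>2"
    by (simp add: g0_def)
qed

lemma g1_eq:
  assumes two: "(2::'a::field) \<noteq> 0" and \<tau>1: "tau1_spec \<tau>1" and \<tau>2: "tau2_spec \<tau>2"
  shows "g1 \<tau>1 \<tau>2 = (\<lambda>f. sm f (xyz 1 tvar (tvar - 1))) ` (Aset :: 'a rf set)"
proof (intro equalityI subsetI)
  fix M :: "'a mat"
  assume "M \<in> g1 \<tau>1 \<tau>2"
  then have M: "M \<in> gset" "\<tau>1 M = - M" "\<tau>2 M = M"
    by (simp_all add: g1_def)
  obtain a b c where abc: "a \<in> Aset" "b \<in> Aset" "c \<in> Aset" and M_eq: "M = xyz a b c"
    using gset_xyzE[OF two M(1)] .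
  have "c * (tpp - 1) = - b"
    using M(2) by (simp add: M_eq tau1_xyz[OF \<tau>1 abc] xyz_uminus xyz_eq_iff[OF two])
  moreover have c: "a * (tvar - 1) = c"
    using M(3) by (simp add: M_eq tau2_xyz[OF \<tau>2 abc] xyz_eq_iff[OF two])
  ultimately have "a * tvar = b"
    using tvar_mult_tpp[where 'a='a] by algebra
  with c have "M = sm a (xyz 1 tvar (tvar - 1))"
    by (simp add: M_eq sm_xyz)
  then show "M \<in> (\<lambda>f. sm f (xyz 1 tvar (tvar - 1))) ` Aset"
    using abc(1) by blast
next
  fix M :: "'a mat"
  assume "M \<in> (\<lambda>f. sm f (xyz 1 tvar (tvar - 1))) ` Aset"
  then obtain f where f: "f \<in> Aset" and M_eq: "M = xyz f (f * tvar) (f * (tvar - 1))"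
    by (auto simp: sm_xyz)
  have coords: "f * tvar \<in> Aset" "f * (tvar - 1) \<in> Aset"
    using f by (simp_all add: Aset_mult Aset_diff Aset_tvar Aset_1)
  have "M \<in> gset"
    unfolding M_eq using f coords by (rule xyz_in_gset)
  moreover have "\<tau>1 M = - M"
    unfolding M_eq tau1_xyz[OF \<tau>1 f coords] xyz_uminus xyz_eq_iff[OF two]
    using tvar_mult_tp[where 'a='a] tvar_mult_tpp[where 'a='a] by algebra
  moreover have "\<tau>2 M = M"
    unfolding M_eq tau2_xyz[OF \<tau>2 f coords] xyz_eq_iff[OF two]
    using tvar_mult_tpp[where 'a='a] by algebra
  ultimately show "M \<in> g1 \<tau>1 \<tau>2"
    by (simp add: g1_def)
qed

lemma g2_eq:
  assumes two: "(2::'a::field) \<noteq> 0" and \<tau>1: "tau1_spec \<tau>1" and \<tau>2: "tau2_spec \<tau>2"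
  shows "g2 \<tau>1 \<tau>2 = (\<lambda>f. sm f (xyz (tp - 1) 1 tp)) ` (Aset :: 'a rf set)"
proof (intro equalityI subsetI)
  fix M :: "'a mat"
  assume "M \<in> g2 \<tau>1 \<tau>2"
  then have M: "M \<in> gset" "\<tau>1 M = - M" "\<tau>2 M = - M"
    by (simp_all add: g2_def)
  obtain a b c where abc: "a \<in> Aset" "b \<in> Aset" "c \<in> Aset" and M_eq: "M = xyz a b c"
    using gset_xyzE[OF two M(1)] .
  have c: "b * tp = c"
    using M(2) by (simp add: M_eq tau1_xyz[OF \<tau>1 abc] xyz_uminus xyz_eq_iff[OF two])
  moreover have "c * tpp = a"
    using M(3) by (simp add: M_eq tau2_xyz[OF \<tau>2 abc] xyz_uminus xyz_eq_iff[OF two])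
  ultimately have "b * (tp - 1) = a"
    by (metis tp_mult_tpp mult.assoc)
  with c have "M = sm b (xyz (tp - 1) 1 tp)"
    by (simp add: M_eq sm_xyz)
  then show "M \<in> (\<lambda>f. sm f (xyz (tp - 1) 1 tp)) ` Aset"
    using abc(2) by blast
next
  fix M :: "'a mat"
  assume "M \<in> (\<lambda>f. sm f (xyz (tp - 1) 1 tp)) ` Aset"
  then obtain f where f: "f \<in> Aset" and M_eq: "M = xyz (f * (tp - 1)) f (f * tp)"
    by (auto simp: sm_xyz)
  have coords: "f * (tp - 1) \<in> Aset" "f * tp \<in> Aset"
    using f by (simp_all add: Aset_mult Aset_diff Aset_tp Aset_1)
  have "M \<in> gset"
    unfolding M_eq using coords(1) f coords(2) by (rule xyz_in_gset)
  moreover have "\<tau>1 M = - M"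
    unfolding M_eq tau1_xyz[OF \<tau>1 coords(1) f coords(2)] xyz_uminus xyz_eq_iff[OF two]
    using tp_mult_tpp[where 'a='a] by algebra
  moreover have "\<tau>2 M = - M"
    unfolding M_eq tau2_xyz[OF \<tau>2 coords(1) f coords(2)] xyz_uminus xyz_eq_iff[OF two]
    using tvar_mult_tp[where 'a='a] tp_mult_tpp[where 'a='a] by algebra
  ultimately show "M \<in> g2 \<tau>1 \<tau>2"
    by (simp add: g2_def)
qed

section \<open>A k-basis of A\<close>

definition peval :: "'a::field poly \<Rightarrow> 'a rf \<Rightarrow> 'a rf" where
  "peval p y = poly (map_poly kc p) y"

lemma peval_pCons: "peval (pCons a p) y = kc a + y * peval p y"
  by (simp add: peval_def map_poly_pCons)

lemma peval_0 [simp]: "peval 0 y = 0"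
  by (simp add: peval_def)

lemma peval_const: "peval [:a:] y = kc a"
  by (simp add: peval_pCons)

lemma peval_add: "peval (p + q) y = peval p y + peval q y"
proof -
  have "map_poly kc (p + q) = map_poly kc p + map_poly kc q"
    by (rule poly_eqI) (simp add: coeff_map_poly kc_add)
  then show ?thesis
    by (simp add: peval_def)
qed

lemma peval_smult: "peval (smult a p) y = kc a * peval p y"
proof -
  have "map_poly kc (smult a p) = smult (kc a) (map_poly kc p)"
    by (rule poly_eqI) (simp add: coeff_map_poly kc_mult)
  then show ?thesis
    by (simp add: peval_def)
qed

lemma peval_mult: "peval (p * q) y = peval p y * peval q y"
  by (induct p) (simp_all add: peval_add peval_smult peval_pCons algebra_simps)

lemma peval_1 [simp]: "peval 1 y = 1"
  by (simp add: peval_def)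

lemma peval_power: "peval (p ^ n) y = peval p y ^ n"
  by (induct n) (simp_all add: peval_mult)

lemma peval_monom: "peval (monom a n) y = kc a * y ^ n"
  by (simp add: peval_def map_poly_monom poly_monom)

lemma peval_pcompose: "peval (pcompose p q) y = peval p (peval q y)"
  by (induct p) (simp_all add: pcompose_pCons peval_add peval_mult peval_const peval_pCons)

lemma peval_tvar: "peval p tvar = to_fract p"
proof (induct p)
  case (pCons a p)
  have "to_fract (pCons a p) = kc a + tvar * to_fract p"
    by (simp add: kc_def tvar_def flip: to_fract_add to_fract_mult)
  with pCons show ?case
    by (simp add: peval_pCons)
qed simp

lemma degree_map_poly_kc: "degree (map_poly kc p) = degree p"
  by (rule degree_map_poly) (simp flip: kc_0)

lemma peval_eq_sum: "peval p y = (\<Sum>i\<le>degree p. kc (coeff p i) * y ^ i)"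
  by (simp add: peval_def poly_altdef degree_map_poly_kc coeff_map_poly)

lemma peval_reflect_poly:
  assumes "y \<noteq> 0"
  shows "peval (reflect_poly p) y = y ^ degree p * peval p (inverse y)"
proof -
  have "map_poly kc (reflect_poly p) = reflect_poly (map_poly kc p)"
    by (rule poly_eqI) (simp add: coeff_map_poly coeff_reflect_poly degree_map_poly_kc)
  then show ?thesis
    using assms by (simp add: peval_def poly_reflect_poly_nz degree_map_poly_kc)
qed

lemma to_fract_monom: "to_fract (monom a n) = kc a * tvar ^ n"
  using peval_monom[of a n tvar] by (simp add: peval_tvar)

lemma to_fract_smult: "to_fract (smult a p) = kc a * to_fract p"
  using peval_smult[of a p tvar] by (simp add: peval_tvar)

definition Abasis :: "'a::field rf set" where
  "Abasis = {1} \<union> {tvar ^ n | n. n \<ge> 1} \<union> {tp ^ n | n. n \<ge> 1} \<union> {tpp ^ n | n. n \<ge> 1}"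

lemma powers_in_Abasis: "tvar ^ n \<in> Abasis" "tp ^ n \<in> Abasis" "tpp ^ n \<in> Abasis"
  by (cases "n = 0"; force simp: Abasis_def)+

lemma Abasis_subset_Aset: "Abasis \<subseteq> Aset"
  unfolding Abasis_def using Aset_1 Aset_power Aset_tvar Aset_tp Aset_tpp by blast

interpretation rfk: module "\<lambda>c (f :: 'a::field rf). kc c * f"
  by unfold_locales (simp_all add: kc_add kc_mult algebra_simps)

lemma peval_in_span:
  assumes "\<And>n. y ^ n \<in> rfk.span B"
  shows "peval p y \<in> rfk.span B"
  unfolding peval_eq_sum by (intro rfk.span_sum rfk.span_scale assms)

lemma to_fract_in_span_Abasis: "to_fract p \<in> rfk.span Abasis"
  using peval_in_span[OF rfk.span_base[OF powers_in_Abasis(1)]] by (simp add: peval_tvar)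

lemma inverse_tvar_power_in_span_Abasis: "inverse tvar ^ n \<in> rfk.span Abasis"
proof -
  have "inverse tvar ^ n = peval ([:1, -1:] ^ n) tp"
    by (simp add: peval_power peval_pCons kc_uminus tp_def)
  also have "\<dots> \<in> rfk.span Abasis"
    by (rule peval_in_span[OF rfk.span_base[OF powers_in_Abasis(2)]])
  finally show ?thesis .
qed

lemma to_fract_mult_inverse_power_in_span:
  assumes "degree d = 1" "\<And>p. to_fract p \<in> rfk.span B" "\<And>n. inverse (to_fract d) ^ n \<in> rfk.span B"
  shows "to_fract p * inverse (to_fract d) ^ n \<in> rfk.span B"
proof (induct n arbitrary: p)
  case 0
  show ?case
    using assms(2) by simp
next
  case (Suc n)
  have "d \<noteq> 0"
    using assms(1) by auto
  have "degree (p mod d) = 0"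
    using degree_mod_less[OF \<open>d \<noteq> 0\<close>, of p] assms(1) by auto
  then obtain q r where p: "p = d * q + [:r:]"
    by (metis degree_0_id div_mult_mod_eq mult.commute)
  have "to_fract p * inverse (to_fract d) ^ Suc n
      = kc r * inverse (to_fract d) ^ Suc n + to_fract q * inverse (to_fract d) ^ n"
    using \<open>d \<noteq> 0\<close> unfolding p by (simp add: kc_def field_simps)
  then show ?case
    using rfk.span_add[OF rfk.span_scale[OF assms(3)] Suc] by (simp only:)
qed

lemma to_fract_div_in_span_Abasis:
  "to_fract p / (tvar ^ m * (1 - tvar) ^ n) \<in> rfk.span Abasis"
proof (induct m arbitrary: n p)
  case 0
  have "inverse (to_fract [:1, -1:]) ^ k \<in> rfk.span Abasis" for k
    using rfk.span_base[OF powers_in_Abasis(3)] by (simp add: tpp_def flip: one_minus_tvar_eq)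
  then have "to_fract p * inverse (to_fract [:1, -1:]) ^ n \<in> rfk.span Abasis"
    by (intro to_fract_mult_inverse_power_in_span to_fract_in_span_Abasis) simp_all
  then show ?case
    by (simp add: divide_inverse power_inverse flip: one_minus_tvar_eq)
next
  case (Suc m)
  note IH_m = Suc
  show ?case
  proof (induct n arbitrary: p)
    case 0
    have "inverse (to_fract [:0, 1:]) ^ k \<in> rfk.span Abasis" for k
      using inverse_tvar_power_in_span_Abasis by (simp flip: tvar_def)
    then have "to_fract p * inverse (to_fract [:0, 1:]) ^ Suc m \<in> rfk.span Abasis"
      by (intro to_fract_mult_inverse_power_in_span to_fract_in_span_Abasis) simp_all
    then show ?case
      by (simp add: divide_inverse power_inverse flip: tvar_def)
  next
    case (Suc n)
    have "a / (x ^ Suc m * s ^ Suc n) = a / (x ^ m * s ^ Suc n) + a / (x ^ Suc m * s ^ n)"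
      if "x \<noteq> 0" "s \<noteq> 0" "x + s = 1" for a x s :: "'a rf"
    proof -
      have "a / (x ^ Suc m * s ^ Suc n) = a * (x + s) / (x ^ Suc m * s ^ Suc n)"
        using that(3) by simp
      also have "\<dots> = a / (x ^ m * s ^ Suc n) + a / (x ^ Suc m * s ^ n)"
        using that(1,2) by (simp add: field_simps)
      finally show ?thesis .
    qed
    then have "to_fract p / (tvar ^ Suc m * (1 - tvar) ^ Suc n)
        = to_fract p / (tvar ^ m * (1 - tvar) ^ Suc n) + to_fract p / (tvar ^ Suc m * (1 - tvar) ^ n)"
      by simp
    then show ?case
      using rfk.span_add[OF IH_m Suc] by (simp only:)
  qed
qed

lemma Aset_subset_span_Abasis: "Aset \<subseteq> rfk.span Abasis"
  unfolding Aset_def using to_fract_div_in_span_Abasis by blast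

lemma span_Abasis: "rfk.span Abasis = Aset"
proof
  have "rfk.subspace Aset"
    unfolding rfk.subspace_def using Aset_0 Aset_add Aset_mult Aset_kc by blast
  then show "rfk.span Abasis \<subseteq> Aset"
    by (rule rfk.span_minimal[OF Abasis_subset_Aset])
qed (rule Aset_subset_span_Abasis)

lemma partial_fractions_unique:
  assumes "to_fract P + tp * peval Q tp + tpp * peval R tpp = 0"
  shows "P = 0 \<and> Q = 0 \<and> R = 0"
proof -
  let ?X = "[:0, 1:] :: 'a poly" and ?S = "[:1, -1:] :: 'a poly"
  define G where "G = pcompose (pCons 0 Q) ?S"
  define H where "H = pCons 0 R"
  \<comment> \<open>G(1/t) = t' Q(t') and H(1/(1 - t)) = t'' R(t''); reflecting G and H clears these denominators.\<close>
  define W where "W = P * ?X ^ degree G * ?S ^ degree H + reflect_poly G * ?S ^ degree H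
                      + pcompose (reflect_poly H) ?S * ?X ^ degree G"
  have "to_fract (reflect_poly G) = tvar ^ degree G * (tp * peval Q tp)"
    by (simp add: G_def peval_reflect_poly peval_pcompose peval_pCons kc_uminus tp_def
        flip: peval_tvar)
  moreover have "to_fract (pcompose (reflect_poly H) ?S) = (1 - tvar) ^ degree H * (tpp * peval R tpp)"
    by (simp add: H_def peval_reflect_poly peval_pcompose peval_pCons kc_uminus tpp_def
        flip: peval_tvar)
  ultimately have "to_fract W = tvar ^ degree G * (1 - tvar) ^ degree H
      * (to_fract P + tp * peval Q tp + tpp * peval R tpp)"
    by (simp add: W_def to_fract_power algebra_simps flip: tvar_def one_minus_tvar_eq)
  then have W: "W = 0"
    using assms by simp
  have "Q = 0"
  proof (rule ccontr)
    assume "Q \<noteq> 0"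
    then have "degree G > 0"
      by (simp add: G_def degree_pcompose)
    then have "poly W 0 = lead_coeff G"
      by (simp add: W_def zero_power)
    then show False
      using W \<open>degree G > 0\<close> by auto
  qed
  moreover have "R = 0"
  proof (rule ccontr)
    assume "R \<noteq> 0"
    then have "degree H > 0"
      by (simp add: H_def)
    then have "poly W 1 = lead_coeff H"
      by (simp add: W_def poly_pcompose zero_power)
    then show False
      using W \<open>degree H > 0\<close> by auto
  qed
  ultimately show ?thesis
    using assms by simp
qed

lemma (in module) independent_if_dual_functionals:
  assumes "\<And>v. v \<in> B \<Longrightarrow> \<exists>\<phi>. (\<forall>x y. \<phi> (x + y) = \<phi> x + \<phi> y) \<and> (\<forall>c x. \<phi> (scale c x) = c * \<phi> x)
      \<and> \<phi> v = 1 \<and> (\<forall>w\<in>B. w \<noteq> v \<longrightarrow> \<phi> w = 0)"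
  shows "independent B"
  unfolding independent_explicit_module
proof (intro allI impI)
  fix T u v
  assume T: "finite T" "T \<subseteq> B" and comb: "(\<Sum>w\<in>T. scale (u w) w) = 0" and "v \<in> T"
  then obtain \<phi> where additive: "\<And>x y. \<phi> (x + y) = \<phi> x + \<phi> y" and homogeneous: "\<And>c x. \<phi> (scale c x) = c * \<phi> x"
    and "\<phi> v = 1" and dual: "\<forall>w\<in>B. w \<noteq> v \<longrightarrow> \<phi> w = 0"
    using assms by blast
  have "\<phi> 0 = 0"
    using additive[of 0 0] by simp
  have "\<phi> (\<Sum>w\<in>T'. scale (u w) w) = (\<Sum>w\<in>T'. u w * \<phi> w)" if "finite T'" for T'
    using that by (induct T') (simp_all add: \<open>\<phi> 0 = 0\<close> additive homogeneous)
  also have "(\<Sum>w\<in>T. u w * \<phi> w) = u v"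
    using T \<open>v \<in> T\<close> \<open>\<phi> v = 1\<close> dual by (subst sum.remove[of T v]) (auto intro!: sum.neutral)
  finally show "u v = 0"
    using T(1) comb \<open>\<phi> 0 = 0\<close> by simp
qed

interpretation poly3: module "\<lambda>c. map_prod (smult c) (map_prod (smult c) (smult (c :: 'a::field)))"
  by unfold_locales (auto simp: smult_add_right smult_add_left)

definition monomial_triples :: "('a::field poly \<times> 'a poly \<times> 'a poly) set" where
  "monomial_triples = range (\<lambda>n. (monom 1 n, 0, 0)) \<union> range (\<lambda>n. (0, monom 1 n, 0))
      \<union> range (\<lambda>n. (0, 0, monom 1 n))"

lemma independent_monomial_triples: "poly3.independent monomial_triples"
proof (rule poly3.independent_if_dual_functionals, goal_cases)
  case (1 v)
  then consider n where "v = (monom 1 n, 0, 0)" | n where "v = (0, monom 1 n, 0)"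
    | n where "v = (0, 0, monom 1 n)"
    by (auto simp: monomial_triples_def)
  then show ?case
  proof cases
    case 1
    then show ?thesis
      by (intro exI[of _ "\<lambda>x. coeff (fst x) n"])
        (auto simp: monomial_triples_def coeff_monom split: if_splits)
  next
    case 2
    then show ?thesis
      by (intro exI[of _ "\<lambda>x. coeff (fst (snd x)) n"])
        (auto simp: monomial_triples_def coeff_monom split: if_splits)
  next
    case 3
    then show ?thesis
      by (intro exI[of _ "\<lambda>x. coeff (snd (snd x)) n"])
        (auto simp: monomial_triples_def coeff_monom split: if_splits)
  qed
qed

definition partial_fraction :: "'a::field poly \<times> 'a poly \<times> 'a poly \<Rightarrow> 'a rf" where
  "partial_fraction = (\<lambda>(P, Q, R). to_fract P + tp * peval Q tp + tpp * peval R tpp)"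

interpretation partial_fraction: module_hom
  "\<lambda>c. map_prod (smult c) (map_prod (smult c) (smult (c :: 'a::field)))" "\<lambda>c f. kc c * f"
  partial_fraction
  by unfold_locales
    (auto simp: partial_fraction_def case_prod_unfold peval_add peval_smult to_fract_smult algebra_simps)

lemma Abasis_eq_image: "Abasis = partial_fraction ` monomial_triples"
proof -
  have shift: "{f n | n. n \<ge> 1} = range (\<lambda>n. f (Suc n))" for f :: "nat \<Rightarrow> 'a rf"
    by (auto dest: Suc_le_D)
  have "UNIV = insert (0::nat) (range Suc)"
    by (auto simp flip: greaterThan_0)
  then have "range (\<lambda>n. tvar ^ n) = insert (1 :: 'a rf) (range (\<lambda>n. tvar ^ Suc n))"
    by (metis image_image image_insert power_0)
  then show ?thesis
    unfolding Abasis_def monomial_triples_def shift image_Un image_image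
    by (simp add: partial_fraction_def to_fract_monom peval_monom)
qed

lemma independent_Abasis: "rfk.independent Abasis"
proof -
  have "inj partial_fraction"
    unfolding partial_fraction.inj_iff_eq_0
    using partial_fractions_unique by (auto simp: partial_fraction_def zero_prod_def)
  then show ?thesis
    unfolding Abasis_eq_image
    using independent_monomial_triples by (rule partial_fraction.independent_inj_image[rotated])
qed

section \<open>Bases of the eigenspaces\<close>

interpretation matk: module "\<lambda>c (M :: 'a::field mat). sm (kc c) M"
  by unfold_locales (simp_all add: sm_add_left sm_add_right sm_sm kc_add kc_mult)

lemma k_span_eq_span: "k_span S = matk.span S"
  unfolding k_span_def matk.span_explicit by blast

lemma k_indep_iff_independent: "k_indep S \<longleftrightarrow> matk.independent S"
  unfolding k_indep_def matk.dependent_explicit by blast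

lemma Bset_eq_image: "Bset u = (\<lambda>f. sm f u) ` Abasis"
  unfolding Bset_def Abasis_def tens_def by auto

lemma k_basis_multiples:
  fixes u :: "'a::field mat"
  assumes "u \<noteq> 0"
  shows "k_basis (Bset u) ((\<lambda>f. sm f u) ` Aset)"
proof -
  interpret times_u: module_hom "\<lambda>c f. kc c * f" "\<lambda>c M. sm (kc c) M" "\<lambda>f. sm f u"
    by unfold_locales (simp_all add: sm_add_left sm_sm)
  have "inj (\<lambda>f. sm f u)"
    using sm_left_cancel[OF assms] by (auto intro: injI)
  then have "matk.independent (Bset u)"
    unfolding Bset_eq_image by (rule times_u.independent_inj_image[OF independent_Abasis])
  moreover have "k_span (Bset u) = (\<lambda>f. sm f u) ` Aset"
    by (simp add: k_span_eq_span Bset_eq_image times_u.span_image span_Abasis)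
  ultimately show ?thesis
    unfolding k_basis_def k_indep_iff_independent Bset_eq_image
    using Abasis_subset_Aset by blast
qed

lemma k_basis_unit_multiples:
  fixes v :: "'a::field mat"
  assumes "v \<noteq> 0" "c \<noteq> 0" "c \<in> Aset" "inverse c \<in> Aset"
  shows "k_basis (Bset (sm c v)) ((\<lambda>f. sm f v) ` Aset)"
proof -
  have "(\<lambda>f. sm f (sm c v)) ` Aset = (\<lambda>f. sm f v) ` Aset"
  proof (intro equalityI image_subsetI)
    fix f :: "'a rf"
    assume "f \<in> Aset"
    then show "sm f (sm c v) \<in> (\<lambda>f. sm f v) ` Aset"
      using assms(3) by (auto simp: sm_sm intro: Aset_mult)
  next
    fix f :: "'a rf"
    assume "f \<in> Aset"
    then have "sm f v = sm (f * inverse c) (sm c v)" and "f * inverse c \<in> Aset"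
      using assms(2,4) by (simp_all add: sm_sm Aset_mult mult.assoc)
    then show "sm f v \<in> (\<lambda>f. sm f (sm c v)) ` Aset"
      by blast
  qed
  moreover have "sm c v \<noteq> 0"
    using assms(1,2) by (simp add: sm_eq_0_iff)
  ultimately show ?thesis
    using k_basis_multiples by metis
qed

lemma u0_eq: "u0 = sm (1 / 4) (xyz tpp (tpp - 1) 1)"
  and u1_eq: "u1 = sm (1 / 4) (xyz 1 tvar (tvar - 1))"
  and u2_eq: "u2 = sm (1 / 4) (xyz (tp - 1) 1 tp)"
  by (simp_all add: u0_def u1_def u2_def xyz_def tens_def add_ac)

theorem corollary2p2:
  fixes \<tau>1 \<tau>2 :: "'a::field mat \<Rightarrow> 'a mat"
  assumes "(2::'a) \<noteq> 0"
    and "tau1_spec \<tau>1" and "tau2_spec \<tau>2"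
  shows "k_basis (Bset (u0::'a mat)) (g0 \<tau>1 \<tau>2)
       \<and> k_basis (Bset (u1::'a mat)) (g1 \<tau>1 \<tau>2)
       \<and> k_basis (Bset (u2::'a mat)) (g2 \<tau>1 \<tau>2)"
proof -
  have "(4::'a) \<noteq> 0"
    using assms(1) by (metis mult_2 mult_eq_0_iff numeral_Bit0)
  then have quarter: "1 / 4 \<noteq> (0 :: 'a rf)" "1 / 4 \<in> (Aset :: 'a rf set)" "inverse (1 / 4) \<in> (Aset :: 'a rf set)"
    using numeral_rf_neq_0 by (simp_all add: Aset_divide_numeral Aset_1 Aset_numeral)
  have "xyz tpp (tpp - 1) 1 \<noteq> (0 :: 'a mat)" "xyz 1 tvar (tvar - 1) \<noteq> (0 :: 'a mat)"
    "xyz (tp - 1) 1 tp \<noteq> (0 :: 'a mat)"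
    unfolding xyz_0[symmetric] xyz_eq_iff[OF assms(1)] by simp_all
  then show ?thesis
    unfolding u0_eq u1_eq u2_eq g0_eq[OF assms] g1_eq[OF assms] g2_eq[OF assms]
    using k_basis_unit_multiples quarter by blast
qed

end
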